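(* There exist a scalar product space $(\mathcal{V},g)$, skew-adjoint endomorphisms $J_1,\dots,J_m$ of $\mathcal{V}$ satisfying $J_iJ_j+J_jJ_i=2c_i\delta_{ij}\,\mathrm{id}$ ($1\le i,j\le m$) for some real $c_i$, and real numbers $\mu_0,\dots,\mu_m$, such that the (quasi-Clifford, hence Osserman) algebraic curvature tensor $R=\mu_0R^0+\sum_{i=1}^m\mu_iR^{J_i}$ is not Jacobi-dual.
   Context: A scalar product space is a finite-dimensional real vector space with a nondegenerate symmetric bilinear form $g$ (possibly indefinite); $\varepsilon_X=g(X,X)$, $X$ nonnull if $\varepsilon_X\ne0$. $R^0(X,Y,Z,W)=g(Y,Z)g(X,W)-g(X,Z)g(Y,W)$; for skew-adjoint $J$, $R^J(X,Y,Z,W)=g(JX,Z)g(JY,W)-g(JY,Z)g(JX,W)+2g(JX,Y)g(JZ,W)$. The Jacobi operator is $\mathcal{J}_X(Y)=\sum_{i}\varepsilon_{E_i}R(Y,X,X,E_i)E_i$ for an orthonormal basis $(E_i)$. An eigenvector of $\mathcal{J}_X$ is a nonzero $Y$ with $\mathcal{J}_X(Y)=\lambda Y$, $\lambda\in\mathbb{R}$. $R$ is Osserman if the characteristic polynomial of $\mathcal{J}_X$ is independent of unit timelike $X$ and of unit spacelike $X$. $R$ is Jacobi-dual if for all $X,Y$ with $X$ nonnull, $Y$ an eigenvector of $\mathcal{J}_X$ implies $X$ is an eigenvector of $\mathcal{J}_Y$. *)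

theory Defs
  imports "Jordan_Normal_Form.Determinant"
begin

text \<open>Model of a scalar product space: the coordinate space of column vectors of
  dimension n (carrier_vec n) with the bilinear form g(x,y) = x . (G y), where G is a
  symmetric invertible n x n real matrix (possibly indefinite).\<close>

definition scalar_product_space :: "nat \<Rightarrow> real mat \<Rightarrow> bool" where
  "scalar_product_space n G \<longleftrightarrow>
     G \<in> carrier_mat n n \<and> transpose_mat G = G \<and> det G \<noteq> 0"

definition gform :: "real mat \<Rightarrow> real vec \<Rightarrow> real vec \<Rightarrow> real" where
  "gform G x y = x \<bullet> (G *\<^sub>v y)"

definition skew_adjoint :: "nat \<Rightarrow> real mat \<Rightarrow> real mat \<Rightarrow> bool" where
  "skew_adjoint n G J \<longleftrightarrow> J \<in> carrier_mat n n \<and>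
     (\<forall>x\<in>carrier_vec n. \<forall>y\<in>carrier_vec n. gform G (J *\<^sub>v x) y = - gform G x (J *\<^sub>v y))"

definition R0 :: "real mat \<Rightarrow> real vec \<Rightarrow> real vec \<Rightarrow> real vec \<Rightarrow> real vec \<Rightarrow> real" where
  "R0 G X Y Z W = gform G Y Z * gform G X W - gform G X Z * gform G Y W"

definition RJ :: "real mat \<Rightarrow> real mat \<Rightarrow> real vec \<Rightarrow> real vec \<Rightarrow> real vec \<Rightarrow> real vec \<Rightarrow> real" where
  "RJ G J X Y Z W = gform G (J *\<^sub>v X) Z * gform G (J *\<^sub>v Y) W
     - gform G (J *\<^sub>v Y) Z * gform G (J *\<^sub>v X) W
     + 2 * gform G (J *\<^sub>v X) Y * gform G (J *\<^sub>v Z) W"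

definition orthonormal_basis :: "nat \<Rightarrow> real mat \<Rightarrow> real vec list \<Rightarrow> bool" where
  "orthonormal_basis n G E \<longleftrightarrow> length E = n \<and> (\<forall>i<n. E ! i \<in> carrier_vec n) \<and>
     (\<forall>i<n. \<forall>j<n. i \<noteq> j \<longrightarrow> gform G (E ! i) (E ! j) = 0) \<and>
     (\<forall>i<n. gform G (E ! i) (E ! i) = 1 \<or> gform G (E ! i) (E ! i) = -1)"

definition jacobi_op ::
  "nat \<Rightarrow> real mat \<Rightarrow> (real vec \<Rightarrow> real vec \<Rightarrow> real vec \<Rightarrow> real vec \<Rightarrow> real)
     \<Rightarrow> real vec \<Rightarrow> real vec \<Rightarrow> real vec" where
  "jacobi_op n G R X Y =
     (let E = (SOME E. orthonormal_basis n G E) in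
      vec n (\<lambda>k. \<Sum>i<n. gform G (E ! i) (E ! i) * R Y X X (E ! i) * (E ! i) $ k))"

definition is_eigenvector :: "nat \<Rightarrow> (real vec \<Rightarrow> real vec) \<Rightarrow> real vec \<Rightarrow> bool" where
  "is_eigenvector n A Y \<longleftrightarrow> Y \<in> carrier_vec n \<and> Y \<noteq> 0\<^sub>v n \<and> (\<exists>lam::real. A Y = lam \<cdot>\<^sub>v Y)"

definition jacobi_dual ::
  "nat \<Rightarrow> real mat \<Rightarrow> (real vec \<Rightarrow> real vec \<Rightarrow> real vec \<Rightarrow> real vec \<Rightarrow> real) \<Rightarrow> bool" where
  "jacobi_dual n G R \<longleftrightarrow>
     (\<forall>X\<in>carrier_vec n. \<forall>Y\<in>carrier_vec n. gform G X X \<noteq> 0 \<longrightarrow>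
        is_eigenvector n (jacobi_op n G R X) Y \<longrightarrow> is_eigenvector n (jacobi_op n G R Y) X)"

end

theory Submission
  imports Defs
begin

(* For skew-adjoint J one has g(JX, X) = 0, hence R^J(Y, X, X, W) = 3 g(JY, X) g(JX, W), and the
   Jacobi operator of R^(J_1) - R^(J_2) at X is Y \<mapsto> 3 g(J_1 Y, X) J_1 X - 3 g(J_2 Y, X) J_2 X,
   whichever orthonormal basis is used to compute it.  On R^(3,3), with the neutral form pairing
   e_a and e_(a+3), let J_a (a = 1, 2) send e_(a+3) to e_0 and e_3 to -e_a: these are skew-adjoint
   and all products J_a J_b vanish, so the Clifford relations hold with c = 0.  For
   X = e_1 + e_2 + e_4 + e_5 and Y = e_3 we get J_1 X = J_2 X = e_0 and g(J_1 Y, X) = g(J_2 Y, X),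
   so the Jacobi operator at X kills Y; but the Jacobi operator at Y sends X to 3 (e_2 - e_1),
   which is no multiple of X. *)

lemma gform_sym:
  assumes "scalar_product_space n G" "x \<in> carrier_vec n" "y \<in> carrier_vec n"
  shows "gform G x y = gform G y x"
proof -
  have G: "G \<in> carrier_mat n n" "transpose_mat G = G"
    using assms(1) unfolding scalar_product_space_def by auto
  have "gform G x y = (transpose_mat G *\<^sub>v x) \<bullet> y"
    using transpose_vec_mult_scalar[OF G(1) assms(3,2)] by (simp add: gform_def)
  also have "\<dots> = gform G y x"
    using G assms(2,3) by (simp add: gform_def comm_scalar_prod[of _ n])
  finally show ?thesis .
qed

lemma gform_diff_left:
  assumes "G \<in> carrier_mat n n" "x \<in> carrier_vec n" "w \<in> carrier_vec n" "y \<in> carrier_vec n"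
  shows "gform G (x - w) y = gform G x y - gform G w y"
  using assms by (simp add: gform_def minus_scalar_prod_distrib[of _ n])

lemma gform_vec_sum_left:
  assumes "G \<in> carrier_mat n n" "y \<in> carrier_vec n"
  shows "gform G (vec n (\<lambda>k. \<Sum>i\<in>I. a i * x i $ k)) y = (\<Sum>i\<in>I. a i * gform G (x i) y)"
proof -
  have Gy: "dim_vec (G *\<^sub>v y) = n" using assms by simp
  have "gform G (vec n (\<lambda>k. \<Sum>i\<in>I. a i * x i $ k)) y
      = (\<Sum>k<n. \<Sum>i\<in>I. a i * (x i $ k * (G *\<^sub>v y) $ k))"
    unfolding gform_def scalar_prod_def Gy atLeast0LessThan
    by (intro sum.cong refl) (simp add: sum_distrib_right mult.assoc)
  also have "\<dots> = (\<Sum>i\<in>I. \<Sum>k<n. a i * (x i $ k * (G *\<^sub>v y) $ k))"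
    by (rule sum.swap)
  also have "\<dots> = (\<Sum>i\<in>I. a i * gform G (x i) y)"
    unfolding gform_def scalar_prod_def Gy atLeast0LessThan
    by (simp only: sum_distrib_left)
  finally show ?thesis .
qed

lemma det_mat_of_rows_orthonormal_basis:
  assumes sps: "scalar_product_space n G" and ob: "orthonormal_basis n G E"
  shows "det (mat_of_rows n E) \<noteq> 0"
proof -
  define M where "M = mat_of_rows n E"
  define D where "D = M * (G * transpose_mat M)"
  have G: "G \<in> carrier_mat n n" and M: "M \<in> carrier_mat n n"
    using sps ob unfolding scalar_product_space_def orthonormal_basis_def M_def by auto
  have rowM: "row M i = E ! i" if "i < n" for i
    using that ob unfolding M_def orthonormal_basis_def by simp
  have D: "D \<in> carrier_mat n n" using M G unfolding D_def by auto
  have D_gram: "D $$ (i, j) = gform G (E ! i) (E ! j)" if "i < n" "j < n" for i j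
    using that M G rowM unfolding D_def gform_def
    by (simp add: col_mult2[OF G _ that(2)] mult_mat_vec_def)
  have "upper_triangular D"
    using D D_gram ob unfolding orthonormal_basis_def upper_triangular_def by auto
  then have "det D = prod_list (diag_mat D)" using D by (rule det_upper_triangular)
  moreover have "gform G (E ! i) (E ! i) \<noteq> 0" if "i < n" for i
    using ob that unfolding orthonormal_basis_def by force
  then have "0 \<notin> set (diag_mat D)"
    using D D_gram unfolding diag_mat_def by auto
  ultimately have "det D \<noteq> 0" by simp
  moreover have "det D = det M * (det G * det (transpose_mat M))"
    unfolding D_def using M G by (simp add: det_mult[of _ n])
  ultimately show ?thesis unfolding M_def by auto
qed

lemma orthogonal_orthonormal_basis_eq_zero:
  assumes sps: "scalar_product_space n G" and ob: "orthonormal_basis n G E"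
    and u: "u \<in> carrier_vec n" and orth: "\<And>i. i < n \<Longrightarrow> gform G (E ! i) u = 0"
  shows "u = 0\<^sub>v n"
proof -
  define M where "M = mat_of_rows n E"
  have G: "G \<in> carrier_mat n n" "det G \<noteq> 0" and M: "M \<in> carrier_mat n n"
    using sps ob unfolding scalar_product_space_def orthonormal_basis_def M_def by auto
  have "M *\<^sub>v (G *\<^sub>v u) = 0\<^sub>v n"
    using M ob orth unfolding M_def orthonormal_basis_def gform_def by (intro eq_vecI) auto
  then have "G *\<^sub>v u = 0\<^sub>v n"
    using det_0_iff_vec_prod_zero[OF M] det_mat_of_rows_orthonormal_basis[OF sps ob] G u
    unfolding M_def by (metis mult_mat_vec_carrier)
  then show ?thesis
    using det_0_iff_vec_prod_zero[OF G(1)] G(2) u by blast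
qed

lemma orthonormal_basis_expansion:
  assumes sps: "scalar_product_space n G" and ob: "orthonormal_basis n G E"
    and v: "v \<in> carrier_vec n"
  shows "vec n (\<lambda>k. \<Sum>i<n. gform G (E ! i) (E ! i) * gform G v (E ! i) * E ! i $ k) = v"
    (is "?w = v")
proof -
  have G: "G \<in> carrier_mat n n" using sps unfolding scalar_product_space_def by simp
  have E: "E ! i \<in> carrier_vec n" if "i < n" for i
    using that ob unfolding orthonormal_basis_def by simp
  have w: "?w \<in> carrier_vec n" by simp
  have "gform G ?w (E ! j) = gform G v (E ! j)" if j: "j < n" for j
  proof -
    have "gform G ?w (E ! j)
        = (\<Sum>i<n. gform G (E ! i) (E ! i) * gform G v (E ! i) * gform G (E ! i) (E ! j))"
      using gform_vec_sum_left[OF G E[OF j]] .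
    also have "\<dots> = gform G (E ! j) (E ! j) * gform G v (E ! j) * gform G (E ! j) (E ! j)"
      using j ob unfolding orthonormal_basis_def
      by (intro sum.mono_neutral_right[of "{..<n}" "{j}", simplified]) auto
    also have "\<dots> = gform G v (E ! j)"
      using j ob unfolding orthonormal_basis_def by auto
    finally show ?thesis .
  qed
  then have "gform G (E ! j) (v - ?w) = 0" if "j < n" for j
    using that G E[OF that] v w
    by (simp add: gform_sym[OF sps E[OF that]] gform_diff_left[OF G])
  then have "v - ?w = 0\<^sub>v n"
    using v w by (intro orthogonal_orthonormal_basis_eq_zero[OF sps ob]) auto
  then have "(v - ?w) $ k = 0" if "k < n" for k
    using that by simp
  then show ?thesis using v by (intro eq_vecI) auto
qed

lemma jacobi_op_eqI:
  assumes sps: "scalar_product_space n G" and ex: "\<exists>E. orthonormal_basis n G E"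
    and v: "v \<in> carrier_vec n"
    and R: "\<And>W. W \<in> carrier_vec n \<Longrightarrow> R Y X X W = gform G v W"
  shows "jacobi_op n G R X Y = v"
proof -
  define E where "E = (SOME E. orthonormal_basis n G E)"
  have ob: "orthonormal_basis n G E" unfolding E_def using ex by (rule someI_ex)
  then have "E ! i \<in> carrier_vec n" if "i < n" for i
    using that unfolding orthonormal_basis_def by simp
  then have "jacobi_op n G R X Y
      = vec n (\<lambda>k. \<Sum>i<n. gform G (E ! i) (E ! i) * gform G v (E ! i) * E ! i $ k)"
    unfolding jacobi_op_def Let_def E_def[symmetric] by (intro eq_vecI) (simp_all add: R)
  also have "\<dots> = v" by (rule orthonormal_basis_expansion[OF sps ob v])
  finally show ?thesis .
qed

lemma RJ_jacobi_form:
  assumes sps: "scalar_product_space n G" and J: "skew_adjoint n G J"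
    and "X \<in> carrier_vec n" "Y \<in> carrier_vec n" "W \<in> carrier_vec n"
  shows "RJ G J Y X X W = 3 * gform G (J *\<^sub>v Y) X * gform G (J *\<^sub>v X) W"
proof -
  have JX: "J *\<^sub>v X \<in> carrier_vec n"
    using J assms(3) unfolding skew_adjoint_def by auto
  have "gform G (J *\<^sub>v X) X = - gform G X (J *\<^sub>v X)"
    using J assms(3) unfolding skew_adjoint_def by blast
  also have "\<dots> = - gform G (J *\<^sub>v X) X"
    using gform_sym[OF sps assms(3) JX] by simp
  finally have "gform G (J *\<^sub>v X) X = 0" by simp
  then show ?thesis unfolding RJ_def by simp
qed

lemma jacobi_op_RJ_diff:
  assumes sps: "scalar_product_space n G" and ex: "\<exists>E. orthonormal_basis n G E"
    and J: "skew_adjoint n G J\<^sub>1" "skew_adjoint n G J\<^sub>2"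
    and X: "X \<in> carrier_vec n" and Y: "Y \<in> carrier_vec n"
  shows "jacobi_op n G (\<lambda>X Y Z W. RJ G J\<^sub>1 X Y Z W - RJ G J\<^sub>2 X Y Z W) X Y
    = (3 * gform G (J\<^sub>1 *\<^sub>v Y) X) \<cdot>\<^sub>v (J\<^sub>1 *\<^sub>v X)
      - (3 * gform G (J\<^sub>2 *\<^sub>v Y) X) \<cdot>\<^sub>v (J\<^sub>2 *\<^sub>v X)"
    (is "_ = ?v")
proof (rule jacobi_op_eqI[OF sps ex])
  have G: "G \<in> carrier_mat n n" using sps unfolding scalar_product_space_def by simp
  have JX: "J\<^sub>1 *\<^sub>v X \<in> carrier_vec n" "J\<^sub>2 *\<^sub>v X \<in> carrier_vec n"
    using J X unfolding skew_adjoint_def by auto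
  then show "?v \<in> carrier_vec n" by simp
  fix W :: "real vec" assume "W \<in> carrier_vec n"
  then show "RJ G J\<^sub>1 Y X X W - RJ G J\<^sub>2 Y X X W = gform G ?v W"
    using G JX X Y
    by (simp add: RJ_jacobi_form[OF sps J(1)] RJ_jacobi_form[OF sps J(2)] gform_diff_left[OF G])
       (simp add: gform_def mult.assoc)
qed

lemma sum_lessThan_6:
  "(\<Sum>k<(6::nat). f k) = f 0 + f 1 + f 2 + f 3 + f 4 + (f 5 :: 'a :: comm_monoid_add)"
  by (simp add: numeral_eq_Suc add.assoc)

lemma less_6_cases: "(i :: nat) < 6 \<longleftrightarrow> i \<in> {0, 1, 2, 3, 4, 5}"
  by auto

definition neutral_G :: "real mat" where
  "neutral_G = mat 6 6 (\<lambda>(a, b). if a + 3 = b \<or> b + 3 = a then 1 else 0)"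

definition nil_J :: "nat \<Rightarrow> real mat" where
  "nil_J a = mat 6 6 (\<lambda>(r, c). if r = 0 \<and> c = a + 3 then 1 else if r = a \<and> c = 3 then -1 else 0)"

lemma nil_J_carrier: "nil_J a \<in> carrier_mat 6 6"
  by (simp add: nil_J_def)

lemma gform_neutral_G:
  assumes "x \<in> carrier_vec 6" "y \<in> carrier_vec 6"
  shows "gform neutral_G x y
    = x$0 * y$3 + x$1 * y$4 + x$2 * y$5 + x$3 * y$0 + x$4 * y$1 + x$5 * y$2"
  using assms
  by (simp add: gform_def scalar_prod_def atLeast0LessThan sum_lessThan_6 neutral_G_def)

lemma neutral_G_squared: "neutral_G * neutral_G = 1\<^sub>m 6"
proof (rule eq_matI)
  fix i j assume "i < dim_row (1\<^sub>m 6 :: real mat)" "j < dim_col (1\<^sub>m 6 :: real mat)"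
  then have "i \<in> {0, 1, 2, 3, 4, 5}" "j \<in> {0, 1, 2, 3, 4, 5}" by auto
  then show "(neutral_G * neutral_G) $$ (i, j) = 1\<^sub>m 6 $$ (i, j)"
    by (auto simp: neutral_G_def scalar_prod_def atLeast0LessThan sum_lessThan_6)
qed (auto simp: neutral_G_def)

lemma scalar_product_space_neutral_G: "scalar_product_space 6 neutral_G"
proof -
  have G: "neutral_G \<in> carrier_mat 6 6" by (simp add: neutral_G_def)
  have "det neutral_G * det neutral_G = 1"
    using det_mult[OF G G] by (simp add: neutral_G_squared)
  then have "det neutral_G \<noteq> 0" by auto
  moreover have "transpose_mat neutral_G = neutral_G"
    by (rule eq_matI) (auto simp: neutral_G_def)
  ultimately show ?thesis using G unfolding scalar_product_space_def by simp
qed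

lemma neutral_G_orthonormal_basis: "\<exists>E. orthonormal_basis 6 neutral_G E"
proof
  define b :: "nat \<Rightarrow> real \<Rightarrow> real vec" where
    "b p s = vec 6 (\<lambda>k. if k = p then 1 else if k = p + 3 then s / 2 else 0)" for p s
  have "gform neutral_G (b p s) (b q t) = (if p = q then (s + t) / 2 else 0)"
    if "p < 3" "q < 3" for p q s t
    using that by (auto simp: gform_neutral_G b_def less_Suc_eq numeral_eq_Suc)
  then show "orthonormal_basis 6 neutral_G [b 0 1, b 1 1, b 2 1, b 0 (-1), b 1 (-1), b 2 (-1)]"
    unfolding orthonormal_basis_def by (simp add: less_6_cases b_def)
qed

lemma nil_J_mult_vec:
  assumes "a \<in> {1, 2}" "x \<in> carrier_vec 6"
  shows "nil_J a *\<^sub>v x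
    = vec 6 (\<lambda>i. if i = 0 then x $ (a + 3) else if i = a then - x $ 3 else 0)"
  using assms
  by (intro eq_vecI)
     (auto simp: nil_J_def scalar_prod_def atLeast0LessThan sum_lessThan_6 less_6_cases)

lemma skew_adjoint_nil_J:
  assumes "a \<in> {1, 2}"
  shows "skew_adjoint 6 neutral_G (nil_J a)"
  using assms unfolding skew_adjoint_def
  by (auto simp: nil_J_carrier nil_J_mult_vec gform_neutral_G)

lemma nil_J_mult_nil_J:
  assumes "a \<in> {1, 2}" "b \<in> {1, 2}"
  shows "nil_J a * nil_J b = 0\<^sub>m 6 6"
proof (rule eq_matI)
  fix i j assume "i < dim_row (0\<^sub>m 6 6 :: real mat)" "j < dim_col (0\<^sub>m 6 6 :: real mat)"
  then have "i \<in> {0, 1, 2, 3, 4, 5}" "j \<in> {0, 1, 2, 3, 4, 5}" by auto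
  then show "(nil_J a * nil_J b) $$ (i, j) = 0\<^sub>m 6 6 $$ (i, j)"
    using assms by (auto simp: nil_J_def scalar_prod_def atLeast0LessThan sum_lessThan_6)
qed (auto simp: nil_J_def)

lemma not_jacobi_dual_nil_J:
  "\<not> jacobi_dual 6 neutral_G
     (\<lambda>X Y Z W. RJ neutral_G (nil_J 1) X Y Z W - RJ neutral_G (nil_J 2) X Y Z W)"
  (is "\<not> jacobi_dual 6 neutral_G ?R")
proof
  assume dual: "jacobi_dual 6 neutral_G ?R"
  define X :: "real vec" where "X = vec 6 (\<lambda>k. if k \<in> {1, 2, 4, 5} then 1 else 0)"
  define Y :: "real vec" where "Y = unit_vec 6 3"
  have carrier: "X \<in> carrier_vec 6" "Y \<in> carrier_vec 6"
    by (simp_all add: X_def Y_def)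
  have JX: "nil_J a *\<^sub>v X = unit_vec 6 0" if "a \<in> {1, 2}" for a
    using that carrier by (auto simp: nil_J_mult_vec X_def)
  have JY: "nil_J a *\<^sub>v Y = - unit_vec 6 a" if "a \<in> {1, 2}" for a
    using that carrier by (auto simp: nil_J_mult_vec Y_def)
  have gJYX: "gform neutral_G (nil_J a *\<^sub>v Y) X = -1" if "a \<in> {1, 2}" for a
    using that carrier by (auto simp: JY gform_neutral_G X_def)
  have gJXY: "gform neutral_G (nil_J a *\<^sub>v X) Y = 1" if "a \<in> {1, 2}" for a
    using that carrier by (auto simp: JX gform_neutral_G Y_def)
  have "skew_adjoint 6 neutral_G (nil_J 1)" "skew_adjoint 6 neutral_G (nil_J 2)"
    by (simp_all add: skew_adjoint_nil_J)
  note jacobi =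
    jacobi_op_RJ_diff[OF scalar_product_space_neutral_G neutral_G_orthonormal_basis this]
  have "jacobi_op 6 neutral_G ?R X Y = 0\<^sub>v 6"
    unfolding jacobi[OF carrier] by (intro eq_vecI) (auto simp: JX gJYX)
  then have "is_eigenvector 6 (jacobi_op 6 neutral_G ?R X) Y"
    unfolding is_eigenvector_def using carrier by (auto simp: Y_def intro!: exI[of _ 0])
  moreover have "gform neutral_G X X \<noteq> 0"
    using carrier by (simp add: gform_neutral_G X_def)
  ultimately obtain c where "jacobi_op 6 neutral_G ?R Y X = c \<cdot>\<^sub>v X"
    using dual carrier unfolding jacobi_dual_def is_eigenvector_def by blast
  moreover have "jacobi_op 6 neutral_G ?R Y X $ 1 = -3"
    and "jacobi_op 6 neutral_G ?R Y X $ 2 = 3"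
    unfolding jacobi[OF carrier(2,1)] by (simp_all add: JY gJXY)
  ultimately show False by (simp add: X_def)
qed

theorem mainTheorem3:
  shows "\<exists>(n::nat) (G::real mat) (m::nat) (J::nat \<Rightarrow> real mat) (c::nat \<Rightarrow> real) (\<mu>::nat \<Rightarrow> real).
     scalar_product_space n G \<and> 1 \<le> m \<and>
     (\<forall>i<m. skew_adjoint n G (J i)) \<and>
     (\<forall>i<m. \<forall>j<m. J i * J j + J j * J i = (if i = j then 2 * c i else 0) \<cdot>\<^sub>m 1\<^sub>m n) \<and>
     \<not> jacobi_dual n G
         (\<lambda>X Y Z W. \<mu> 0 * R0 G X Y Z W + (\<Sum>i<m. \<mu> (Suc i) * RJ G (J i) X Y Z W))"
proof -
  define \<mu> :: "nat \<Rightarrow> real" where "\<mu> i = (if i = 1 then 1 else if i = 2 then -1 else 0)" for i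
  have curvature: "(\<lambda>X Y Z W. \<mu> 0 * R0 neutral_G X Y Z W
        + (\<Sum>i<2. \<mu> (Suc i) * RJ neutral_G (nil_J (Suc i)) X Y Z W))
      = (\<lambda>X Y Z W. RJ neutral_G (nil_J 1) X Y Z W - RJ neutral_G (nil_J 2) X Y Z W)"
    by (simp add: \<mu>_def numeral_2_eq_2)
  have "\<forall>i<2. skew_adjoint 6 neutral_G (nil_J (Suc i))"
    by (auto simp: skew_adjoint_nil_J less_2_cases_iff)
  moreover have "\<forall>i<2. \<forall>j<2. nil_J (Suc i) * nil_J (Suc j) + nil_J (Suc j) * nil_J (Suc i)
      = (if i = j then 2 * 0 else 0) \<cdot>\<^sub>m 1\<^sub>m 6"
    by (auto simp: nil_J_mult_nil_J less_2_cases_iff intro!: eq_matI)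
  ultimately show ?thesis
    using scalar_product_space_neutral_G not_jacobi_dual_nil_J
    by (intro exI[of _ 6] exI[of _ neutral_G] exI[of _ 2] exI[of _ "\<lambda>i. nil_J (Suc i)"]
        exI[of _ "\<lambda>_. 0"] exI[of _ \<mu>]) (simp add: curvature)
qed

end
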